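(* Let $\Phi$ be a Leonard system in $\mathcal A$ with eigenvalue sequence $\theta_0,\dots,\theta_d$ and dual eigenvalue sequence $\theta^*_0,\dots,\theta^*_d$, let $u_0,\dots,u_d$ be its polynomials as defined below, and let $u^*_0,\dots,u^*_d$ be the corresponding polynomials for $\Phi^*$. Then $$u_i(\theta_j)=u^*_j(\theta^*_i)\qquad(0\le i,j\le d).$$
   Context: Let $\mathbb K$ be a field, $d\ge 0$ an integer, and $\mathcal A$ a $\mathbb K$-algebra isomorphic to $\mathrm{Mat}_{d+1}(\mathbb K)$, with identity $I$ and trace $\mathrm{tr}$. An element $A\in\mathcal A$ is multiplicity-free if it has $d+1$ mutually distinct eigenvalues in $\mathbb K$; if $\theta_0,\dots,\theta_d$ is an ordering of them, the primitive idempotent of $A$ associated with $\theta_i$ is $E_i=\prod_{j\ne i}(A-\theta_jI)/(\theta_i-\theta_j)$. A Leonard system in $\mathcal A$ is a sequence $\Phi=(A;A^*;\{E_i\}_{i=0}^d;\{E^*_i\}_{i=0}^d)$ such that: (i) $A,A^*$ are multiplicity-free; (ii) $E_0,\dots,E_d$ is an ordering of the primitive idempotents of $A$; (iii) $E^*_0,\dots,E^*_d$ is an ordering of those of $A^*$; (iv) $E_iA^*E_j=0$ if $|i-j|>1$ and $\ne0$ if $|i-j|=1$ $(0\le i,j\le d)$; (v) $E^*_iAE^*_j=0$ if $|i-j|>1$ and $\neq0$ if $|i-j|=1$ $(0\le i,j\le d)$. $\theta_i$ (resp. $\theta^*_i$) is the eigenvalue of $A$ (resp. $A^*$) associated with $E_i$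 (resp. $E^*_i$). The dual Leonard system is $\Phi^*=(A^*;A;\{E^*_i\}_{i=0}^d;\{E_i\}_{i=0}^d)$. Define $a_i=\mathrm{tr}(E^*_iA)$ $(0\le i\le d)$, $x_i=\mathrm{tr}(E^*_iAE^*_{i-1}A)$ $(1\le i\le d)$, $x_0=0$, and polynomials $p_0,\dots,p_{d+1}$ by $p_0=1$, $p_{-1}=0$, $\lambda p_i=p_{i+1}+a_ip_i+x_ip_{i-1}$ $(0\le i\le d)$. One has $p_i(\theta_0)\ne0$ for $0\le i\le d$, and $u_i:=p_i/p_i(\theta_0)$ $(0\le i\le d)$. *)

theory Defs
  imports "Jordan_Normal_Form.Char_Poly" "HOL-Computational_Algebra.Polynomial"
begin

text \<open>The algebra is taken to be the full matrix algebra of (d+1) x (d+1) matrices over K.\<close>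

definition mtrace :: "'a::comm_ring_1 mat \<Rightarrow> 'a" where
  "mtrace M = (\<Sum>i<dim_row M. M $$ (i, i))"

fun mat_list_prod :: "nat \<Rightarrow> 'a::comm_ring_1 mat list \<Rightarrow> 'a mat" where
  "mat_list_prod n [] = 1\<^sub>m n"
| "mat_list_prod n (M # Ms) = M * mat_list_prod n Ms"

definition prim_idem :: "nat \<Rightarrow> 'a::field mat \<Rightarrow> (nat \<Rightarrow> 'a) \<Rightarrow> nat \<Rightarrow> 'a mat" where
  "prim_idem d A th i =
     mat_list_prod (Suc d)
       (map (\<lambda>j. (1 / (th i - th j)) \<cdot>\<^sub>m (A - th j \<cdot>\<^sub>m 1\<^sub>m (Suc d)))
            (filter (\<lambda>j. j \<noteq> i) [0..<Suc d]))"

definition mult_free :: "nat \<Rightarrow> 'a::field mat \<Rightarrow> bool" where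
  "mult_free d A \<longleftrightarrow> A \<in> carrier_mat (Suc d) (Suc d) \<and>
     (\<exists>th. inj_on th {..d} \<and> (\<forall>i\<le>d. eigenvalue A (th i)))"

definition idem_ordering :: "nat \<Rightarrow> 'a::field mat \<Rightarrow> (nat \<Rightarrow> 'a) \<Rightarrow> (nat \<Rightarrow> 'a mat) \<Rightarrow> bool" where
  "idem_ordering d A th E \<longleftrightarrow> inj_on th {..d} \<and> (\<forall>i\<le>d. eigenvalue A (th i)) \<and>
     (\<forall>i\<le>d. E i = prim_idem d A th i)"

definition tridiag_cond :: "nat \<Rightarrow> (nat \<Rightarrow> 'a::field mat) \<Rightarrow> 'a mat \<Rightarrow> bool" where
  "tridiag_cond d E B \<longleftrightarrow> (\<forall>i\<le>d. \<forall>j\<le>d.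
      (Suc i < j \<or> Suc j < i \<longrightarrow> E i * B * E j = 0\<^sub>m (Suc d) (Suc d)) \<and>
      (Suc i = j \<or> Suc j = i \<longrightarrow> E i * B * E j \<noteq> 0\<^sub>m (Suc d) (Suc d)))"

definition leonard_system :: "nat \<Rightarrow> 'a::field mat \<Rightarrow> 'a mat \<Rightarrow> (nat \<Rightarrow> 'a mat) \<Rightarrow> (nat \<Rightarrow> 'a mat) \<Rightarrow> bool" where
  "leonard_system d A As E Es \<longleftrightarrow>
     mult_free d A \<and> mult_free d As \<and>
     (\<exists>th. idem_ordering d A th E) \<and> (\<exists>ths. idem_ordering d As ths Es) \<and>
     tridiag_cond d E As \<and> tridiag_cond d Es A"

definition ls_a :: "'a::field mat \<Rightarrow> (nat \<Rightarrow> 'a mat) \<Rightarrow> nat \<Rightarrow> 'a" where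
  "ls_a A Es i = mtrace (Es i * A)"

definition ls_x :: "'a::field mat \<Rightarrow> (nat \<Rightarrow> 'a mat) \<Rightarrow> nat \<Rightarrow> 'a" where
  "ls_x A Es i = (if i = 0 then 0 else mtrace (Es i * A * Es (i - 1) * A))"

text \<open>p_0 = 1, p_{-1} = 0, lambda p_i = p_{i+1} + a_i p_i + x_i p_{i-1}.\<close>
fun lpoly :: "(nat \<Rightarrow> 'a::field) \<Rightarrow> (nat \<Rightarrow> 'a) \<Rightarrow> nat \<Rightarrow> 'a poly" where
  "lpoly a x 0 = 1"
| "lpoly a x (Suc 0) = [:- a 0, 1:]"
| "lpoly a x (Suc (Suc i)) =
     [:- a (Suc i), 1:] * lpoly a x (Suc i) - Polynomial.smult (x (Suc i)) (lpoly a x i)"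

definition ls_p :: "'a::field mat \<Rightarrow> (nat \<Rightarrow> 'a mat) \<Rightarrow> nat \<Rightarrow> 'a poly" where
  "ls_p A Es i = lpoly (ls_a A Es) (ls_x A Es) i"

definition ls_u :: "'a::field mat \<Rightarrow> (nat \<Rightarrow> 'a mat) \<Rightarrow> (nat \<Rightarrow> 'a) \<Rightarrow> nat \<Rightarrow> 'a \<Rightarrow> 'a" where
  "ls_u A Es th i t = poly (ls_p A Es i) t / poly (ls_p A Es i) (th 0)"

end

(*
  Write E*_i for the primitive idempotents of A* and chain_i = E*_i A E*_(i-1) A ... A E*_0.
  Tridiagonality of A with respect to the E*_i gives the three-term recurrence
  A chain_i = chain_(i+1) + a_i chain_i + x_i chain_(i-1), hence E_j chain_i = p_i(th_j) E_j E*_0.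
  All primitive idempotents have rank one (E M E = tr(E M) E), so sandwiching these identities yields
    p_i(th_j) tr(E*_0 E_j) tr(E*_i E_0) = p_i(th_0) tr(E*_0 E_j E*_i E_0)
  with nonzero traces on the left, i.e.
    u_i(th_j) = tr(E*_0 E_j E*_i E_0) / (tr(E*_0 E_j) tr(E*_i E_0)).
  Transposing all matrices gives a Leonard system with the same polynomials and reverses the
  product under the trace; the resulting expression is the same formula for the dual system
  with i and j exchanged, which is u*_j(th*_i).
*)
theory Submission
  imports Defs
begin

section \<open>Traces, scalar multiples and matrix units\<close>

(* Products are reassociated only on demand, so that sandwiches E * M * E stay visible to rewriting. *)
declare assoc_mult_mat[simp del]

lemma square_mult_carrier[simp]: "X \<in> carrier_mat n n \<Longrightarrow> Y \<in> carrier_mat n n \<Longrightarrow> X * Y \<in> carrier_mat n n"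
  by (rule mult_carrier_mat)

lemma mtrace_mult_commute:
  fixes X Y :: "'a::comm_ring_1 mat"
  assumes "X \<in> carrier_mat n m" "Y \<in> carrier_mat m n"
  shows "mtrace (X * Y) = mtrace (Y * X)"
proof -
  have "mtrace (X * Y) = (\<Sum>i<n. \<Sum>k<m. X $$ (i, k) * Y $$ (k, i))"
    using assms by (simp add: mtrace_def scalar_prod_def atLeast0LessThan)
  also have "\<dots> = (\<Sum>k<m. \<Sum>i<n. Y $$ (k, i) * X $$ (i, k))"
    by (subst sum.swap) (simp add: mult.commute)
  also have "\<dots> = mtrace (Y * X)"
    using assms by (simp add: mtrace_def scalar_prod_def atLeast0LessThan)
  finally show ?thesis .
qed

lemma mtrace_transpose: "X \<in> carrier_mat n n \<Longrightarrow> mtrace X\<^sup>T = mtrace X"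
  by (simp add: mtrace_def)

lemma mtrace_transpose_mult:
  fixes X Y :: "'a::comm_ring_1 mat"
  assumes "X \<in> carrier_mat n n" "Y \<in> carrier_mat n n"
  shows "mtrace (X\<^sup>T * Y\<^sup>T) = mtrace (Y * X)"
  using assms by (simp add: transpose_mult[symmetric] mtrace_transpose[of _ n])

lemma mtrace_transpose_mult4:
  fixes W X Y Z :: "'a::comm_ring_1 mat"
  assumes "W \<in> carrier_mat n n" "X \<in> carrier_mat n n" "Y \<in> carrier_mat n n" "Z \<in> carrier_mat n n"
  shows "mtrace (W\<^sup>T * X\<^sup>T * Y\<^sup>T * Z\<^sup>T) = mtrace (Z * Y * X * W)"
proof -
  have "(Z * Y * X * W)\<^sup>T = W\<^sup>T * (Z * Y * X)\<^sup>T"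
    using assms by (intro transpose_mult) auto
  also have "(Z * Y * X)\<^sup>T = X\<^sup>T * (Z * Y)\<^sup>T"
    using assms by (intro transpose_mult) auto
  also have "(Z * Y)\<^sup>T = Y\<^sup>T * Z\<^sup>T"
    using assms by (intro transpose_mult) auto
  finally have "(Z * Y * X * W)\<^sup>T = W\<^sup>T * X\<^sup>T * Y\<^sup>T * Z\<^sup>T"
    using assms by (simp add: assoc_mult_mat[of _ n n _ n _ n])
  then show ?thesis
    using assms by (metis mtrace_transpose square_mult_carrier)
qed

lemma transpose_smult_mat: "(c \<cdot>\<^sub>m X)\<^sup>T = c \<cdot>\<^sub>m X\<^sup>T"
  by (rule eq_matI) auto

lemma smult_smult_mat: "a \<cdot>\<^sub>m (b \<cdot>\<^sub>m X) = (a * b) \<cdot>\<^sub>m (X :: 'a::semigroup_mult mat)"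
  by (rule eq_matI) (auto simp: mult.assoc)

lemma one_smult_mat: "1 \<cdot>\<^sub>m X = (X :: 'a::monoid_mult mat)"
  by (rule eq_matI) auto

lemma zero_smult_mat: "X \<in> carrier_mat n m \<Longrightarrow> 0 \<cdot>\<^sub>m X = (0\<^sub>m n m :: 'a::mult_zero mat)"
  by (rule eq_matI) auto

lemma mult_add_smult_distrib:
  fixes Z X Y W :: "'a::comm_ring_1 mat"
  assumes "Z \<in> carrier_mat n n" "X \<in> carrier_mat n n" "Y \<in> carrier_mat n n" "W \<in> carrier_mat n n"
  shows "Z * (X + b \<cdot>\<^sub>m Y + c \<cdot>\<^sub>m W) = Z * X + b \<cdot>\<^sub>m (Z * Y) + c \<cdot>\<^sub>m (Z * W)"
proof -
  have "Z * (X + b \<cdot>\<^sub>m Y + c \<cdot>\<^sub>m W) = Z * (X + b \<cdot>\<^sub>m Y) + Z * (c \<cdot>\<^sub>m W)"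
    using assms by (intro mult_add_distrib_mat) auto
  also have "Z * (X + b \<cdot>\<^sub>m Y) = Z * X + Z * (b \<cdot>\<^sub>m Y)"
    using assms by (intro mult_add_distrib_mat) auto
  finally show ?thesis using assms by (simp add: mult_smult_distrib)
qed

lemma eq_smult_if_add_smult_eq:
  fixes X F :: "'a::field mat"
  assumes X: "X \<in> carrier_mat n m" and F: "F \<in> carrier_mat n m"
    and eq: "X + b \<cdot>\<^sub>m (u \<cdot>\<^sub>m F) + c \<cdot>\<^sub>m (v \<cdot>\<^sub>m F) = w \<cdot>\<^sub>m F"
  shows "X = (w - b * u - c * v) \<cdot>\<^sub>m F"
proof (rule eq_matI)
  fix r s assume "r < dim_row ((w - b * u - c * v) \<cdot>\<^sub>m F)" "s < dim_col ((w - b * u - c * v) \<cdot>\<^sub>m F)"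
  then have rs: "r < n" "s < m" using F by auto
  have "X $$ (r, s) + b * (u * F $$ (r, s)) + c * (v * F $$ (r, s)) = w * F $$ (r, s)"
    using arg_cong[OF eq, of "\<lambda>M. M $$ (r, s)"] X F rs by (simp add: add.assoc)
  then show "X $$ (r, s) = ((w - b * u - c * v) \<cdot>\<^sub>m F) $$ (r, s)"
    using F rs by (simp add: algebra_simps flip: eq_diff_eq)
qed (use X F in auto)

lemma mat_nonzero_entry:
  assumes "X \<in> carrier_mat n m" "X \<noteq> 0\<^sub>m n m"
  obtains a b where "a < n" "b < m" "X $$ (a, b) \<noteq> 0"
proof -
  have "\<exists>a b. a < n \<and> b < m \<and> X $$ (a, b) \<noteq> 0"
  proof (rule ccontr)
    assume "\<not> ?thesis"
    then have "X = 0\<^sub>m n m" using assms(1) by (intro eq_matI) auto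
    with assms(2) show False ..
  qed
  then show ?thesis using that by blast
qed

lemma smult_mat_cancel:
  fixes F :: "'a::field mat"
  assumes "F \<in> carrier_mat n m" "F \<noteq> 0\<^sub>m n m" "b \<cdot>\<^sub>m F = c \<cdot>\<^sub>m F"
  shows "b = c"
proof -
  obtain r s where "r < n" "s < m" "F $$ (r, s) \<noteq> 0"
    using mat_nonzero_entry[OF assms(1,2)] .
  moreover have "(b \<cdot>\<^sub>m F) $$ (r, s) = (c \<cdot>\<^sub>m F) $$ (r, s)" using assms(3) by simp
  ultimately show ?thesis using assms(1) by simp
qed

lemma smult_mat_eq_zeroD:
  fixes X :: "'a::field mat"
  assumes "X \<in> carrier_mat n m" "c \<cdot>\<^sub>m X = 0\<^sub>m n m" "c \<noteq> 0"
  shows "X = 0\<^sub>m n m"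
proof (rule eq_matI)
  fix r s assume "r < dim_row (0\<^sub>m n m :: 'a mat)" "s < dim_col (0\<^sub>m n m :: 'a mat)"
  then have "c * X $$ (r, s) = 0"
    using assms(1) index_smult_mat(1)[of r X s c] arg_cong[OF assms(2), of "\<lambda>M. M $$ (r, s)"] by simp
  then show "X $$ (r, s) = 0\<^sub>m n m $$ (r, s)"
    using assms(3) \<open>r < _\<close> \<open>s < _\<close> by simp
qed (use assms(1) in auto)

definition mat_unit :: "nat \<Rightarrow> nat \<Rightarrow> nat \<Rightarrow> 'a::{zero,one} mat" where
  "mat_unit n a b = mat n n (\<lambda>(r, s). if r = a \<and> s = b then 1 else 0)"

lemma mat_unit_carrier[simp]: "mat_unit n a b \<in> carrier_mat n n"
  by (simp add: mat_unit_def)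

lemma mat_unit_dim[simp]: "dim_row (mat_unit n a b) = n" "dim_col (mat_unit n a b) = n"
  by (simp_all add: mat_unit_def)

lemma index_mult_mat_unit:
  fixes X :: "'a::comm_ring_1 mat"
  assumes "X \<in> carrier_mat m n" "r < m" "s < n" "a < n"
  shows "(X * mat_unit n a b) $$ (r, s) = (if s = b then X $$ (r, a) else 0)"
proof -
  have "(X * mat_unit n a b) $$ (r, s) = (\<Sum>k<n. X $$ (r, k) * (if k = a \<and> s = b then 1 else 0))"
    using assms by (simp add: mat_unit_def scalar_prod_def atLeast0LessThan)
  also have "\<dots> = (\<Sum>k<n. if k = a then (if s = b then X $$ (r, k) else 0) else 0)"
    by (rule sum.cong) auto
  finally show ?thesis using assms by simp
qed

lemma index_mat_unit_mult:
  fixes X :: "'a::comm_ring_1 mat"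
  assumes "X \<in> carrier_mat n m" "r < n" "s < m" "b < n"
  shows "(mat_unit n a b * X) $$ (r, s) = (if r = a then X $$ (b, s) else 0)"
proof -
  have "(mat_unit n a b * X) $$ (r, s) = (\<Sum>k<n. (if r = a \<and> k = b then 1 else 0) * X $$ (k, s))"
    using assms by (simp add: mat_unit_def scalar_prod_def atLeast0LessThan)
  also have "\<dots> = (\<Sum>k<n. if k = b then (if r = a then X $$ (k, s) else 0) else 0)"
    by (rule sum.cong) auto
  finally show ?thesis using assms by simp
qed

lemma mtrace_mult_mat_unit:
  fixes X :: "'a::comm_ring_1 mat"
  assumes "X \<in> carrier_mat n n" "a < n" "b < n"
  shows "mtrace (X * mat_unit n b a) = X $$ (a, b)"
proof -
  have "mtrace (X * mat_unit n b a) = (\<Sum>r<n. if r = a then X $$ (r, b) else 0)"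
    unfolding mtrace_def using assms
    by (intro sum.cong) (auto simp del: index_mult_mat simp: index_mult_mat_unit index_mult_mat(2,3))
  then show ?thesis using assms by simp
qed

lemma exists_mtrace_mult_nonzero:
  fixes X :: "'a::comm_ring_1 mat"
  assumes "X \<in> carrier_mat n n" "X \<noteq> 0\<^sub>m n n"
  obtains M where "M \<in> carrier_mat n n" "mtrace (X * M) \<noteq> 0"
proof -
  obtain a b where "a < n" "b < n" "X $$ (a, b) \<noteq> 0" using mat_nonzero_entry[OF assms] .
  then show ?thesis using that[of "mat_unit n b a"] assms(1) by (simp add: mtrace_mult_mat_unit)
qed

lemma exists_sandwich_nonzero:
  fixes X Y :: "'a::field mat"
  assumes X: "X \<in> carrier_mat n n" "X \<noteq> 0\<^sub>m n n" and Y: "Y \<in> carrier_mat n n" "Y \<noteq> 0\<^sub>m n n"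
  obtains M where "M \<in> carrier_mat n n" "X * M * Y \<noteq> 0\<^sub>m n n"
proof -
  obtain a b where ab: "a < n" "b < n" "X $$ (a, b) \<noteq> 0" using mat_nonzero_entry[OF X] .
  obtain c e where ce: "c < n" "e < n" "Y $$ (c, e) \<noteq> 0" using mat_nonzero_entry[OF Y] .
  let ?M = "mat_unit n b c :: 'a mat"
  have "(X * ?M * Y) $$ (a, e) = (\<Sum>s<n. (X * ?M) $$ (a, s) * Y $$ (s, e))"
    using X Y ab ce
    by (simp del: index_mult_mat add: index_mult_mat(1)[of a "X * ?M" e Y] index_mult_mat(2,3)
        scalar_prod_def atLeast0LessThan)
  also have "\<dots> = (\<Sum>s<n. if s = c then X $$ (a, b) * Y $$ (s, e) else 0)"
    using X ab ce index_mult_mat_unit[OF X(1), of a _ b c] by (intro sum.cong) auto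
  also have "\<dots> = X $$ (a, b) * Y $$ (c, e)" using ce by simp
  finally have "(X * ?M * Y) $$ (a, e) \<noteq> 0" using ab ce by simp
  then have "X * ?M * Y \<noteq> 0\<^sub>m n n" using ab ce by (metis index_zero_mat(1))
  then show ?thesis using that[of ?M] by simp
qed

lemma mat_unit_sandwich:
  fixes Z :: "'a::comm_ring_1 mat"
  assumes Z: "Z \<in> carrier_mat n n" and i: "i < n"
  shows "mat_unit n i i * Z * mat_unit n i i = Z $$ (i, i) \<cdot>\<^sub>m mat_unit n i i"
proof (rule eq_matI)
  fix r s assume "r < dim_row (Z $$ (i, i) \<cdot>\<^sub>m mat_unit n i i)" "s < dim_col (Z $$ (i, i) \<cdot>\<^sub>m mat_unit n i i)"
  then have rs: "r < n" "s < n" by auto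
  have "(mat_unit n i i * Z * mat_unit n i i) $$ (r, s) = (if s = i then (mat_unit n i i * Z) $$ (r, i) else 0)"
    by (rule index_mult_mat_unit[of _ n n]) (use Z rs i in simp_all)
  also have "\<dots> = (if s = i then (if r = i then Z $$ (i, i) else 0) else 0)"
    using index_mat_unit_mult[OF Z rs(1) i i, of i] by simp
  also have "\<dots> = (Z $$ (i, i) \<cdot>\<^sub>m mat_unit n i i) $$ (r, s)" using rs by (auto simp: mat_unit_def)
  finally show "(mat_unit n i i * Z * mat_unit n i i) $$ (r, s) = (Z $$ (i, i) \<cdot>\<^sub>m mat_unit n i i) $$ (r, s)" .
qed (use Z in auto)

lemma rank_one_mtrace_nonzero:
  fixes F G X Y :: "'a::field mat"
  assumes carrier: "F \<in> carrier_mat n n" "G \<in> carrier_mat n n" "X \<in> carrier_mat n n" "Y \<in> carrier_mat n n"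
    and F: "\<And>M. M \<in> carrier_mat n n \<Longrightarrow> F * M * F = mtrace (F * M) \<cdot>\<^sub>m F"
    and G: "\<And>M. M \<in> carrier_mat n n \<Longrightarrow> G * M * G = mtrace (G * M) \<cdot>\<^sub>m G"
    and GXF: "G * X * F \<noteq> 0\<^sub>m n n" and FYG: "F * Y * G \<noteq> 0\<^sub>m n n"
  shows "mtrace (G * X * F * Y) \<noteq> 0"
proof
  assume zero: "mtrace (G * X * F * Y) = 0"
  obtain M where M: "M \<in> carrier_mat n n" "(G * X * F) * M * (F * Y * G) \<noteq> 0\<^sub>m n n"
    using exists_sandwich_nonzero[OF _ GXF _ FYG] carrier by auto
  have "(G * X * F) * M * (F * Y * G) = G * (X * (F * M * F) * Y) * G"
    using carrier M by (simp add: assoc_mult_mat[of _ n n _ n _ n])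
  also have "\<dots> = mtrace (F * M) \<cdot>\<^sub>m (G * (X * F * Y) * G)"
    using carrier M by (simp add: F mult_smult_assoc_mat[of _ n n _ n] mult_smult_distrib[of _ n n _ n])
  also have "G * (X * F * Y) * G = mtrace (G * (X * F * Y)) \<cdot>\<^sub>m G"
    using carrier by (intro G) simp
  also have "mtrace (G * (X * F * Y)) = mtrace (G * X * F * Y)"
    using carrier by (simp add: assoc_mult_mat[of _ n n _ n _ n])
  finally show False using M zero carrier by (simp add: smult_smult_mat zero_smult_mat)
qed

section \<open>Rank-one idempotent decompositions\<close>

text \<open>\<open>E_sandwich\<close> says that each \<open>E i\<close> has rank one; the two cancellation laws stand in
  for \<open>E 0 + \<dots> + E d = 1\<close>.\<close>

locale primitive_idempotents =
  fixes d :: nat and A :: "'a::field mat" and th :: "nat \<Rightarrow> 'a" and E :: "nat \<Rightarrow> 'a mat"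
  assumes carrier_A[simp]: "A \<in> carrier_mat (Suc d) (Suc d)"
    and carrier_E[simp]: "i \<le> d \<Longrightarrow> E i \<in> carrier_mat (Suc d) (Suc d)"
    and E_mult_E: "i \<le> d \<Longrightarrow> j \<le> d \<Longrightarrow> E i * E j = (if i = j then E i else 0\<^sub>m (Suc d) (Suc d))"
    and A_mult_E: "i \<le> d \<Longrightarrow> A * E i = th i \<cdot>\<^sub>m E i"
    and E_mult_A: "i \<le> d \<Longrightarrow> E i * A = th i \<cdot>\<^sub>m E i"
    and E_sandwich: "i \<le> d \<Longrightarrow> M \<in> carrier_mat (Suc d) (Suc d) \<Longrightarrow> E i * M * E i = mtrace (E i * M) \<cdot>\<^sub>m E i"
    and E_nonzero: "i \<le> d \<Longrightarrow> E i \<noteq> 0\<^sub>m (Suc d) (Suc d)"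
    and E_left_cancel: "X \<in> carrier_mat (Suc d) (Suc d) \<Longrightarrow> Y \<in> carrier_mat (Suc d) (Suc d) \<Longrightarrow>
      (\<And>i. i \<le> d \<Longrightarrow> E i * X = E i * Y) \<Longrightarrow> X = Y"
    and E_right_cancel: "X \<in> carrier_mat (Suc d) (Suc d) \<Longrightarrow> Y \<in> carrier_mat (Suc d) (Suc d) \<Longrightarrow>
      (\<And>i. i \<le> d \<Longrightarrow> X * E i = Y * E i) \<Longrightarrow> X = Y"

lemma primitive_idempotents_transpose:
  assumes "primitive_idempotents d A th E"
  shows "primitive_idempotents d A\<^sup>T th (\<lambda>i. (E i)\<^sup>T)"
proof -
  interpret primitive_idempotents d A th E by (fact assms)
  let ?n = "Suc d"
  have transpose_mult_E: "X\<^sup>T * (E i)\<^sup>T = (E i * X)\<^sup>T" "(E i)\<^sup>T * X\<^sup>T = (X * E i)\<^sup>T"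
    if "i \<le> d" "X \<in> carrier_mat ?n ?n" for i X
    using that by (simp_all add: transpose_mult[of _ ?n ?n _ ?n])
  show ?thesis
  proof
    fix i assume i: "i \<le> d"
    show "(E i)\<^sup>T \<noteq> 0\<^sub>m ?n ?n" using E_nonzero[OF i] by (metis transpose_transpose zero_transpose_mat)
    show "A\<^sup>T * (E i)\<^sup>T = th i \<cdot>\<^sub>m (E i)\<^sup>T" "(E i)\<^sup>T * A\<^sup>T = th i \<cdot>\<^sub>m (E i)\<^sup>T"
      using i by (simp_all add: transpose_mult_E E_mult_A A_mult_E transpose_smult_mat)
    fix M :: "'a mat" assume M: "M \<in> carrier_mat ?n ?n"
    have "(E i)\<^sup>T * M * (E i)\<^sup>T = (E i * M\<^sup>T * E i)\<^sup>T"
      using i M by (simp add: transpose_mult[of _ ?n ?n _ ?n] assoc_mult_mat[of _ ?n ?n _ ?n _ ?n])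
    also have "\<dots> = mtrace (E i * M\<^sup>T) \<cdot>\<^sub>m (E i)\<^sup>T"
      using i M by (simp add: E_sandwich transpose_smult_mat)
    also have "mtrace (E i * M\<^sup>T) = mtrace ((E i)\<^sup>T * M)"
      using i M mtrace_transpose_mult[of "E i" ?n "M\<^sup>T"] mtrace_mult_commute[of "E i" ?n ?n "M\<^sup>T"] by simp
    finally show "(E i)\<^sup>T * M * (E i)\<^sup>T = mtrace ((E i)\<^sup>T * M) \<cdot>\<^sub>m (E i)\<^sup>T" .
  next
    fix i j assume "i \<le> d" "j \<le> d"
    then show "(E i)\<^sup>T * (E j)\<^sup>T = (if i = j then (E i)\<^sup>T else 0\<^sub>m ?n ?n)"
      by (simp add: transpose_mult_E E_mult_E)
  next
    fix X Y :: "'a mat"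
    assume X: "X \<in> carrier_mat ?n ?n" and Y: "Y \<in> carrier_mat ?n ?n"
    {
      assume "\<And>i. i \<le> d \<Longrightarrow> (E i)\<^sup>T * X = (E i)\<^sup>T * Y"
      then have "X\<^sup>T * E i = Y\<^sup>T * E i" if "i \<le> d" for i
        using that X Y transpose_mult_E(2)[of i "X\<^sup>T"] transpose_mult_E(2)[of i "Y\<^sup>T"] by simp
      then show "X = Y" using E_right_cancel[of "X\<^sup>T" "Y\<^sup>T"] X Y by simp
    }
    {
      assume "\<And>i. i \<le> d \<Longrightarrow> X * (E i)\<^sup>T = Y * (E i)\<^sup>T"
      then have "E i * X\<^sup>T = E i * Y\<^sup>T" if "i \<le> d" for i
        using that X Y transpose_mult_E(1)[of i "X\<^sup>T"] transpose_mult_E(1)[of i "Y\<^sup>T"] by simp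
      then show "X = Y" using E_left_cancel[of "X\<^sup>T" "Y\<^sup>T"] X Y by simp
    }
  qed simp_all
qed

lemma tridiag_cond_transpose:
  fixes B :: "'a::field mat"
  assumes "tridiag_cond d E B" and "B \<in> carrier_mat (Suc d) (Suc d)"
    and "\<And>i. i \<le> d \<Longrightarrow> E i \<in> carrier_mat (Suc d) (Suc d)"
  shows "tridiag_cond d (\<lambda>i. (E i)\<^sup>T) B\<^sup>T"
proof -
  have "(E i)\<^sup>T * B\<^sup>T * (E j)\<^sup>T = (E j * B * E i)\<^sup>T" if "i \<le> d" "j \<le> d" for i j
    using assms(2,3) that
    by (simp add: transpose_mult[of _ "Suc d" "Suc d" _ "Suc d"] assoc_mult_mat[of _ "Suc d" "Suc d" _ "Suc d" _ "Suc d"])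
  then show ?thesis
    using assms(1) unfolding tridiag_cond_def
    by (metis transpose_transpose zero_transpose_mat)
qed

section \<open>Leonard systems\<close>

lemma poly_ls_p_Suc:
  "poly (ls_p A Es (Suc m)) t =
     (t - ls_a A Es m) * poly (ls_p A Es m) t - ls_x A Es m * poly (ls_p A Es (m - 1)) t"
  by (cases m) (simp_all add: ls_p_def ls_x_def algebra_simps)

lemma lpoly_cong:
  "(\<And>k. k \<le> i \<Longrightarrow> a k = a' k) \<Longrightarrow> (\<And>k. k \<le> i \<Longrightarrow> x k = x' k) \<Longrightarrow> lpoly a x i = lpoly a' x' i"
  by (induction a x i rule: lpoly.induct) simp_all

lemma ls_p_transpose:
  fixes A :: "'a::field mat"
  assumes A: "A \<in> carrier_mat n n" and Es: "\<And>k. k \<le> i \<Longrightarrow> Es k \<in> carrier_mat n n"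
  shows "ls_p A\<^sup>T (\<lambda>k. (Es k)\<^sup>T) i = ls_p A Es i"
  unfolding ls_p_def
proof (rule lpoly_cong)
  fix k assume k: "k \<le> i"
  show "ls_a A\<^sup>T (\<lambda>k. (Es k)\<^sup>T) k = ls_a A Es k"
    using A Es[OF k] by (simp add: ls_a_def mtrace_transpose_mult mtrace_mult_commute[of A n n])
  have "mtrace ((Es k)\<^sup>T * A\<^sup>T * (Es (k - 1))\<^sup>T * A\<^sup>T) = mtrace ((A * Es (k - 1) * A) * Es k)"
    using A Es[OF k] Es[of "k - 1"] k by (simp add: mtrace_transpose_mult4)
  also have "\<dots> = mtrace (Es k * (A * Es (k - 1) * A))"
    using A Es[OF k] Es[of "k - 1"] k by (intro mtrace_mult_commute) simp_all
  also have "\<dots> = mtrace (Es k * A * Es (k - 1) * A)"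
    using A Es[OF k] Es[of "k - 1"] k by (simp add: assoc_mult_mat[of _ n n _ n _ n])
  finally show "ls_x A\<^sup>T (\<lambda>k. (Es k)\<^sup>T) k = ls_x A Es k" by (simp add: ls_x_def)
qed

locale abstract_leonard_system =
  primitive_idempotents d A th E + dual: primitive_idempotents d As ths Es
  for d A th E As ths Es +
  assumes tridiag: "tridiag_cond d E As"
    and dual_tridiag: "tridiag_cond d Es A"
begin

abbreviation N where "N \<equiv> Suc d"

lemmas mat_simps = assoc_mult_mat[of _ N N _ N _ N] mult_smult_assoc_mat[of _ N N _ N]
  mult_smult_distrib[of _ N N _ N] smult_smult_mat left_mult_zero_mat[of _ N N] right_mult_zero_mat[of _ N N]

lemma dual_system: "abstract_leonard_system d As ths Es A th E"
  by (intro abstract_leonard_system.intro abstract_leonard_system_axioms.intro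
      dual.primitive_idempotents_axioms primitive_idempotents_axioms tridiag dual_tridiag)

lemma transpose_system:
  "abstract_leonard_system d A\<^sup>T th (\<lambda>i. (E i)\<^sup>T) As\<^sup>T ths (\<lambda>i. (Es i)\<^sup>T)"
  by (intro abstract_leonard_system.intro abstract_leonard_system_axioms.intro
      primitive_idempotents_transpose primitive_idempotents_axioms dual.primitive_idempotents_axioms
      tridiag_cond_transpose tridiag dual_tridiag) simp_all

lemma dual_idem_A_dual_idem_eq_zero:
  "i \<le> d \<Longrightarrow> j \<le> d \<Longrightarrow> Suc i < j \<or> Suc j < i \<Longrightarrow> Es i * A * Es j = 0\<^sub>m N N"
  using dual_tridiag unfolding tridiag_cond_def by blast

lemma dual_idem_A_dual_idem_neq_zero:
  "i \<le> d \<Longrightarrow> j \<le> d \<Longrightarrow> Suc i = j \<or> Suc j = i \<Longrightarrow> Es i * A * Es j \<noteq> 0\<^sub>m N N"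
  using dual_tridiag unfolding tridiag_cond_def by blast

fun chain :: "nat \<Rightarrow> 'a mat" where
  "chain 0 = Es 0"
| "chain (Suc i) = Es (Suc i) * A * chain i"

declare chain.simps(2)[simp del]

lemma chain_carrier[simp]: "i \<le> d \<Longrightarrow> chain i \<in> carrier_mat N N"
  by (induction i) (auto simp: chain.simps)

lemma dual_idem_mult_chain: "i \<le> d \<Longrightarrow> k \<le> d \<Longrightarrow> Es k * chain i = (if k = i then chain i else 0\<^sub>m N N)"
proof (induction i)
  case 0
  then show ?case by (simp add: dual.E_mult_E)
next
  case (Suc i)
  then have "i \<le> d" by simp
  have "Es k * chain (Suc i) = (Es k * Es (Suc i)) * A * chain i"
    using Suc.prems \<open>i \<le> d\<close> by (simp add: chain.simps mat_simps)
  then show ?case using Suc.prems \<open>i \<le> d\<close> by (simp add: dual.E_mult_E chain.simps mat_simps)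
qed

lemma dual_idem_mult_chain_mult: "i \<le> d \<Longrightarrow> X \<in> carrier_mat N n \<Longrightarrow> Es i * (chain i * X) = chain i * X"
  using dual_idem_mult_chain[of i i] by (simp flip: assoc_mult_mat[of "Es i" N N "chain i" N X n])

lemma ls_x_Suc: "Suc k \<le> d \<Longrightarrow> ls_x A Es (Suc k) = mtrace (Es k * A * Es (Suc k) * A)"
  using mtrace_mult_commute[of "Es (Suc k) * A" N N "Es k * A"] by (simp add: ls_x_def mat_simps)

lemma ls_x_nonzero: "Suc k \<le> d \<Longrightarrow> ls_x A Es (Suc k) \<noteq> 0"
  unfolding ls_x_Suc
  by (rule rank_one_mtrace_nonzero[of _ N])
    (simp_all add: dual.E_sandwich dual_idem_A_dual_idem_neq_zero)

lemma dual_idem_A_mult_chain_Suc: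
  assumes "Suc k \<le> d"
  shows "Es k * (A * chain (Suc k)) = ls_x A Es (Suc k) \<cdot>\<^sub>m chain k"
proof -
  have "Es k * (A * chain (Suc k)) = (Es k * (A * Es (Suc k) * A) * Es k) * chain k"
    using assms dual_idem_mult_chain[of k k] by (simp add: chain.simps mat_simps)
  also have "Es k * (A * Es (Suc k) * A) * Es k = mtrace (Es k * (A * Es (Suc k) * A)) \<cdot>\<^sub>m Es k"
    using assms by (intro dual.E_sandwich) simp_all
  finally show ?thesis
    using assms dual_idem_mult_chain[of k k] by (simp add: ls_x_Suc mat_simps)
qed

lemma A_mult_chain:
  assumes "i < d"
  shows "A * chain i = chain (Suc i) + ls_a A Es i \<cdot>\<^sub>m chain i + ls_x A Es i \<cdot>\<^sub>m chain (i - 1)"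
proof (rule dual.E_left_cancel)
  show "A * chain i \<in> carrier_mat N N"
    and "chain (Suc i) + ls_a A Es i \<cdot>\<^sub>m chain i + ls_x A Es i \<cdot>\<^sub>m chain (i - 1) \<in> carrier_mat N N"
    using assms by simp_all
  fix k assume k: "k \<le> d"
  have i: "i \<le> d" "Suc i \<le> d" "i - 1 \<le> d" using assms by auto
  have rhs: "Es k * (chain (Suc i) + ls_a A Es i \<cdot>\<^sub>m chain i + ls_x A Es i \<cdot>\<^sub>m chain (i - 1))
      = Es k * chain (Suc i) + ls_a A Es i \<cdot>\<^sub>m (Es k * chain i) + ls_x A Es i \<cdot>\<^sub>m (Es k * chain (i - 1))"
    using i k by (intro mult_add_smult_distrib[of _ N]) auto
  have lhs: "Es k * (A * chain i) = (Es k * A * Es i) * chain i"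
    using i k dual_idem_mult_chain[of i i] by (simp add: mat_simps)
  consider "k = Suc i" | "k = i" | "Suc k = i" | "Suc k < i \<or> Suc i < k" by linarith
  then show "Es k * (A * chain i) = Es k * (chain (Suc i) + ls_a A Es i \<cdot>\<^sub>m chain i + ls_x A Es i \<cdot>\<^sub>m chain (i - 1))"
  proof cases
    case 1
    have "Es k * (A * chain i) = chain (Suc i)"
      using 1 i by (simp add: chain.simps mat_simps)
    moreover have "Suc i \<noteq> i - 1" by simp
    ultimately show ?thesis
      unfolding rhs using 1 i by (simp add: dual_idem_mult_chain)
  next
    case 2
    have "Es i * A * Es i = ls_a A Es i \<cdot>\<^sub>m Es i"
      using i by (simp add: dual.E_sandwich ls_a_def)
    moreover have "ls_x A Es i \<cdot>\<^sub>m (Es i * chain (i - 1)) = 0\<^sub>m N N"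
      using i by (cases i) (simp_all add: ls_x_def dual_idem_mult_chain zero_smult_mat)
    ultimately show ?thesis
      unfolding rhs lhs using 2 i by (simp add: dual_idem_mult_chain mat_simps)
  next
    case 3
    then show ?thesis
      unfolding rhs using i dual_idem_A_mult_chain_Suc[of k] by (auto simp: dual_idem_mult_chain)
  next
    case 4
    then have zero: "Es k * A * Es i = 0\<^sub>m N N"
      using i k by (intro dual_idem_A_dual_idem_eq_zero) auto
    show ?thesis
      unfolding rhs lhs zero using 4 i k by (auto simp: dual_idem_mult_chain mat_simps)
  qed
qed

lemma idem_mult_chain:
  assumes j: "j \<le> d"
  shows "i \<le> d \<Longrightarrow> E j * chain i = poly (ls_p A Es i) (th j) \<cdot>\<^sub>m (E j * Es 0)"
proof (induction i rule: less_induct)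
  case (less i)
  show ?case
  proof (cases i)
    case 0
    then show ?thesis by (simp add: ls_p_def one_smult_mat)
  next
    case (Suc m)
    with less.prems have m: "m < d" by simp
    let ?p = "\<lambda>k. poly (ls_p A Es k) (th j)"
    have IH: "E j * chain m = ?p m \<cdot>\<^sub>m (E j * Es 0)" "E j * chain (m - 1) = ?p (m - 1) \<cdot>\<^sub>m (E j * Es 0)"
      using less.IH Suc m by auto
    have "E j * chain (Suc m) + ls_a A Es m \<cdot>\<^sub>m (E j * chain m) + ls_x A Es m \<cdot>\<^sub>m (E j * chain (m - 1))
        = E j * (A * chain m)"
      unfolding A_mult_chain[OF m] using j m by (intro mult_add_smult_distrib[of _ N, symmetric]) auto
    also have "\<dots> = (th j * ?p m) \<cdot>\<^sub>m (E j * Es 0)"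
      using j m by (simp add: E_mult_A IH mat_simps flip: assoc_mult_mat[of "E j" N N A N "chain m" N])
    finally have "E j * chain (Suc m) = (th j * ?p m - ls_a A Es m * ?p m - ls_x A Es m * ?p (m - 1)) \<cdot>\<^sub>m (E j * Es 0)"
      unfolding IH using j m by (intro eq_smult_if_add_smult_eq[of _ N N]) auto
    then show ?thesis
      using Suc by (simp add: poly_ls_p_Suc algebra_simps)
  qed
qed

lemma chain_nonzero: "i \<le> d \<Longrightarrow> chain i \<noteq> 0\<^sub>m N N"
proof (induction i)
  case 0
  then show ?case using dual.E_nonzero[of 0] by simp
next
  case (Suc i)
  show ?case
  proof
    assume "chain (Suc i) = 0\<^sub>m N N"
    then have "ls_x A Es (Suc i) \<cdot>\<^sub>m chain i = 0\<^sub>m N N"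
      using Suc.prems dual_idem_A_mult_chain_Suc[of i] by (simp add: mat_simps)
    then show False
      using Suc smult_mat_eq_zeroD[of "chain i" N N] ls_x_nonzero[of i] by simp
  qed
qed

lemma idem_mult_dual_idem0_nonzero:
  assumes j: "j \<le> d"
  shows "E j * Es 0 \<noteq> 0\<^sub>m N N"
proof
  assume zero: "E j * Es 0 = 0\<^sub>m N N"
  have "E j * Es i = 0\<^sub>m N N * Es i" if i: "i \<le> d" for i
  proof -
    obtain M where M: "M \<in> carrier_mat N N" "mtrace (chain i * M) \<noteq> 0"
      using exists_mtrace_mult_nonzero[of "chain i" N] chain_nonzero i by auto
    have "chain i * M * Es i = mtrace (chain i * M) \<cdot>\<^sub>m Es i"
      using dual.E_sandwich[of i "chain i * M"] dual_idem_mult_chain_mult[of i M] i M by (simp add: mat_simps)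
    then have "mtrace (chain i * M) \<cdot>\<^sub>m (E j * Es i) = (E j * chain i) * M * Es i"
      using i j M by (simp add: mat_simps)
    also have "E j * chain i = 0\<^sub>m N N"
      using idem_mult_chain[OF j i] zero by simp
    finally have "mtrace (chain i * M) \<cdot>\<^sub>m (E j * Es i) = 0\<^sub>m N N"
      using i M by (simp add: mat_simps)
    then show ?thesis
      using i j M smult_mat_eq_zeroD[of "E j * Es i" N N] by (simp add: mat_simps)
  qed
  then have "E j = 0\<^sub>m N N" using dual.E_right_cancel[of "E j" "0\<^sub>m N N"] j by simp
  with E_nonzero j show False by simp
qed

lemma dual_idem0_mult_idem_nonzero:
  assumes j: "j \<le> d"
  shows "Es 0 * E j \<noteq> 0\<^sub>m N N"
proof -
  interpret transposed: abstract_leonard_system d "A\<^sup>T" th "\<lambda>i. (E i)\<^sup>T" "As\<^sup>T" ths "\<lambda>i. (Es i)\<^sup>T"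
    by (fact transpose_system)
  have "(Es 0 * E j)\<^sup>T \<noteq> 0\<^sub>m N N"
    using transposed.idem_mult_dual_idem0_nonzero[OF j] j by (simp add: transpose_mult[of _ N N _ N])
  then show ?thesis by auto
qed

lemma mtrace_dual_idem0_mult_idem_nonzero: "j \<le> d \<Longrightarrow> mtrace (Es 0 * E j) \<noteq> 0"
  using rank_one_mtrace_nonzero[of "E j" N "Es 0" "1\<^sub>m N" "1\<^sub>m N"]
  by (simp add: E_sandwich dual.E_sandwich idem_mult_dual_idem0_nonzero dual_idem0_mult_idem_nonzero
      right_mult_one_mat[of _ N N])

lemma mtrace_dual_idem_mult_idem0_nonzero: "i \<le> d \<Longrightarrow> mtrace (Es i * E 0) \<noteq> 0"
proof -
  interpret dual_system: abstract_leonard_system d As ths Es A th E by (fact dual_system)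
  assume "i \<le> d"
  then show ?thesis
    using dual_system.mtrace_dual_idem0_mult_idem_nonzero[of i] mtrace_mult_commute[of "Es i" N N "E 0"]
    by simp
qed

lemma mtrace_smult_chain:
  assumes i: "i \<le> d"
  shows "mtrace (Es i * E 0) \<cdot>\<^sub>m chain i = poly (ls_p A Es i) (th 0) \<cdot>\<^sub>m (Es i * E 0 * Es 0)"
proof -
  have "mtrace (Es i * E 0) \<cdot>\<^sub>m chain i = (mtrace (Es i * E 0) \<cdot>\<^sub>m Es i) * chain i"
    using i by (simp add: dual_idem_mult_chain mat_simps)
  also have "mtrace (Es i * E 0) \<cdot>\<^sub>m Es i = Es i * E 0 * Es i"
    using i by (simp add: dual.E_sandwich)
  also have "Es i * E 0 * Es i * chain i = Es i * (E 0 * chain i)"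
    using i by (simp add: dual_idem_mult_chain mat_simps)
  also have "E 0 * chain i = poly (ls_p A Es i) (th 0) \<cdot>\<^sub>m (E 0 * Es 0)"
    using idem_mult_chain[of 0 i] i by simp
  finally show ?thesis
    using i by (simp add: mat_simps)
qed

lemma ls_p_mtrace_identity:
  assumes i: "i \<le> d" and j: "j \<le> d"
  shows "poly (ls_p A Es i) (th j) * (mtrace (Es 0 * E j) * mtrace (Es i * E 0))
       = poly (ls_p A Es i) (th 0) * mtrace (Es 0 * E j * Es i * E 0)"
proof -
  define p q c t S where "p = poly (ls_p A Es i) (th j)" and "q = poly (ls_p A Es i) (th 0)"
    and "c = mtrace (Es i * E 0)" and "t = mtrace (Es 0 * E j)" and "S = mtrace (Es 0 * E j * Es i * E 0)"
  have "Es 0 * E j * (c \<cdot>\<^sub>m chain i) = c \<cdot>\<^sub>m (Es 0 * (E j * chain i))"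
    using i j by (simp add: mat_simps)
  also have "E j * chain i = p \<cdot>\<^sub>m (E j * Es 0)"
    using idem_mult_chain[OF j i] by (simp add: p_def)
  also have "c \<cdot>\<^sub>m (Es 0 * (p \<cdot>\<^sub>m (E j * Es 0))) = (c * p) \<cdot>\<^sub>m (Es 0 * E j * Es 0)"
    using j by (simp add: mat_simps)
  also have "Es 0 * E j * Es 0 = t \<cdot>\<^sub>m Es 0"
    using j by (simp add: t_def dual.E_sandwich)
  finally have "(c * p * t) \<cdot>\<^sub>m Es 0 = Es 0 * E j * (q \<cdot>\<^sub>m (Es i * E 0 * Es 0))"
    using mtrace_smult_chain[OF i] by (simp add: c_def q_def smult_smult_mat)
  also have "\<dots> = q \<cdot>\<^sub>m (Es 0 * (E j * Es i * E 0) * Es 0)"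
    using i j by (simp add: mat_simps)
  also have "Es 0 * (E j * Es i * E 0) * Es 0 = S \<cdot>\<^sub>m Es 0"
    using i j dual.E_sandwich[of 0 "E j * Es i * E 0"] by (simp add: S_def mat_simps)
  finally have "(c * p * t) \<cdot>\<^sub>m Es 0 = (q * S) \<cdot>\<^sub>m Es 0"
    by (simp add: smult_smult_mat)
  then have "c * p * t = q * S"
    using dual.E_nonzero[of 0] by (intro smult_mat_cancel[of "Es 0" N N]) simp_all
  then show ?thesis
    unfolding p_def q_def c_def t_def S_def by (simp add: ac_simps)
qed

lemma poly_ls_p_th0_nonzero:
  assumes i: "i \<le> d"
  shows "poly (ls_p A Es i) (th 0) \<noteq> 0"
proof
  assume q: "poly (ls_p A Es i) (th 0) = 0"
  have "chain i = 0\<^sub>m N N"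
  proof (rule E_left_cancel)
    fix j assume j: "j \<le> d"
    have "poly (ls_p A Es i) (th j) = 0"
      using ls_p_mtrace_identity[OF i j] q mtrace_dual_idem0_mult_idem_nonzero[OF j]
        mtrace_dual_idem_mult_idem0_nonzero[OF i] by simp
    then show "E j * chain i = E j * 0\<^sub>m N N"
      using idem_mult_chain[OF j i] j by (simp add: zero_smult_mat mat_simps)
  qed (use i in simp_all)
  with chain_nonzero i show False by blast
qed

lemma ls_u_eq_mtrace_ratio:
  assumes "i \<le> d" "j \<le> d"
  shows "ls_u A Es th i (th j) = mtrace (Es 0 * E j * Es i * E 0) / (mtrace (Es 0 * E j) * mtrace (Es i * E 0))"
  using ls_p_mtrace_identity[OF assms] poly_ls_p_th0_nonzero[OF assms(1)]
    mtrace_dual_idem0_mult_idem_nonzero[OF assms(2)] mtrace_dual_idem_mult_idem0_nonzero[OF assms(1)]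
  unfolding ls_u_def by (simp add: frac_eq_eq)

lemma ls_u_duality:
  assumes i: "i \<le> d" and j: "j \<le> d"
  shows "ls_u A Es th i (th j) = ls_u As E ths j (ths i)"
proof -
  interpret transposed: abstract_leonard_system d "A\<^sup>T" th "\<lambda>i. (E i)\<^sup>T" "As\<^sup>T" ths "\<lambda>i. (Es i)\<^sup>T"
    by (fact transpose_system)
  interpret dual_system: abstract_leonard_system d As ths Es A th E
    by (fact dual_system)
  have "ls_u A Es th i (th j) = ls_u A\<^sup>T (\<lambda>k. (Es k)\<^sup>T) th i (th j)"
    unfolding ls_u_def using i by (simp add: ls_p_transpose[of A N i Es])
  also have "\<dots> = mtrace ((Es 0)\<^sup>T * (E j)\<^sup>T * (Es i)\<^sup>T * (E 0)\<^sup>T)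
      / (mtrace ((Es 0)\<^sup>T * (E j)\<^sup>T) * mtrace ((Es i)\<^sup>T * (E 0)\<^sup>T))"
    by (rule transposed.ls_u_eq_mtrace_ratio[OF i j])
  also have "\<dots> = mtrace (E 0 * Es i * E j * Es 0) / (mtrace (E 0 * Es i) * mtrace (E j * Es 0))"
    using i j by (simp add: mtrace_transpose_mult4[of _ N] mtrace_transpose_mult[of _ N] mult.commute)
  also have "\<dots> = ls_u As E ths j (ths i)"
    by (rule dual_system.ls_u_eq_mtrace_ratio[OF j i, symmetric])
  finally show ?thesis .
qed

end

section \<open>Primitive idempotents of a matrix with distinct eigenvalues\<close>

lemma mult_zero_vec: "(M :: 'a::comm_ring_1 mat) \<in> carrier_mat n m \<Longrightarrow> M *\<^sub>v 0\<^sub>v m = 0\<^sub>v n"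
  by (rule eq_vecI) (auto simp: scalar_prod_def)

lemma smult_vec_zero_vec: "c \<cdot>\<^sub>v 0\<^sub>v n = (0\<^sub>v n :: 'a::mult_zero vec)"
  by (rule eq_vecI) auto

lemma zero_mat_mult_vec: "v \<in> carrier_vec m \<Longrightarrow> 0\<^sub>m n m *\<^sub>v v = (0\<^sub>v n :: 'a::comm_ring_1 vec)"
  by (rule eq_vecI) (auto simp: scalar_prod_def)

lemma smult_mat_mult_vec:
  "(M :: 'a::comm_ring_1 mat) \<in> carrier_mat n m \<Longrightarrow> v \<in> carrier_vec m \<Longrightarrow> (c \<cdot>\<^sub>m M) *\<^sub>v v = c \<cdot>\<^sub>v (M *\<^sub>v v)"
  by (rule eq_vecI) (auto simp: scalar_prod_def sum_distrib_left ac_simps)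

lemma mat_list_prod_carrier:
  "(\<And>M. M \<in> set Ms \<Longrightarrow> M \<in> carrier_mat n n) \<Longrightarrow> mat_list_prod n Ms \<in> carrier_mat n n"
  by (induction Ms) auto

lemma mat_list_prod_mult_common_eigenvector:
  fixes G :: "nat \<Rightarrow> 'a::field mat"
  assumes G: "\<And>j. j \<in> set js \<Longrightarrow> G j \<in> carrier_mat n n \<and> G j *\<^sub>v v = g j \<cdot>\<^sub>v v"
    and v: "v \<in> carrier_vec n"
  shows "mat_list_prod n (map G js) *\<^sub>v v = prod_list (map g js) \<cdot>\<^sub>v v"
  using G
proof (induction js)
  case Nil
  then show ?case using v by auto
next
  case (Cons j js)
  have carrier: "mat_list_prod n (map G js) \<in> carrier_mat n n"
    using Cons.prems by (intro mat_list_prod_carrier) auto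
  have Gj: "G j \<in> carrier_mat n n" "G j *\<^sub>v v = g j \<cdot>\<^sub>v v" using Cons.prems by auto
  have "mat_list_prod n (map G (j # js)) *\<^sub>v v = G j *\<^sub>v (prod_list (map g js) \<cdot>\<^sub>v v)"
    using carrier Gj v Cons by (simp add: assoc_mult_mat_vec[of _ n n _ n])
  also have "\<dots> = prod_list (map g (j # js)) \<cdot>\<^sub>v v"
    using Gj v by (simp add: mult_mat_vec smult_smult_assoc mult.commute)
  finally show ?case .
qed

lemma prim_idem_carrier:
  "A \<in> carrier_mat (Suc d) (Suc d) \<Longrightarrow> prim_idem d A th i \<in> carrier_mat (Suc d) (Suc d)"
  unfolding prim_idem_def by (rule mat_list_prod_carrier) (auto simp del: upt_Suc)

lemma prim_idem_mult_eigenvector: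
  fixes A :: "'a::field mat"
  assumes A: "A \<in> carrier_mat (Suc d) (Suc d)" and v: "v \<in> carrier_vec (Suc d)"
    and Av: "A *\<^sub>v v = t \<cdot>\<^sub>v v"
  shows "prim_idem d A th i *\<^sub>v v = (\<Prod>j \<in> {..d} - {i}. (t - th j) / (th i - th j)) \<cdot>\<^sub>v v"
proof -
  have factor: "((1 / (th i - th j)) \<cdot>\<^sub>m (A - th j \<cdot>\<^sub>m 1\<^sub>m (Suc d))) *\<^sub>v v = ((t - th j) / (th i - th j)) \<cdot>\<^sub>v v"
    for j
  proof -
    have "(A - th j \<cdot>\<^sub>m 1\<^sub>m (Suc d)) *\<^sub>v v = t \<cdot>\<^sub>v v - th j \<cdot>\<^sub>v v"
      using A v Av by (simp add: minus_mult_distrib_mat_vec smult_mat_mult_vec[of _ "Suc d" "Suc d"])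
    also have "\<dots> = (t - th j) \<cdot>\<^sub>v v"
      using v by (auto simp: algebra_simps intro!: eq_vecI)
    finally have "(A - th j \<cdot>\<^sub>m 1\<^sub>m (Suc d)) *\<^sub>v v = (t - th j) \<cdot>\<^sub>v v" .
    moreover have "A - th j \<cdot>\<^sub>m 1\<^sub>m (Suc d) \<in> carrier_mat (Suc d) (Suc d)"
      using A by (simp add: minus_carrier_mat)
    ultimately show ?thesis
      using v by (simp add: smult_mat_mult_vec[of _ "Suc d" "Suc d"] smult_smult_assoc)
  qed
  have "prim_idem d A th i *\<^sub>v v = (\<Prod>j\<leftarrow>filter (\<lambda>j. j \<noteq> i) [0..<Suc d]. (t - th j) / (th i - th j)) \<cdot>\<^sub>v v"
    unfolding prim_idem_def using A v factor
    by (intro mat_list_prod_mult_common_eigenvector) (auto simp del: upt_Suc)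
  also have "set (filter (\<lambda>j. j \<noteq> i) [0..<Suc d]) = {..d} - {i}"
    by auto
  then have "(\<Prod>j\<leftarrow>filter (\<lambda>j. j \<noteq> i) [0..<Suc d]. (t - th j) / (th i - th j))
      = (\<Prod>j \<in> {..d} - {i}. (t - th j) / (th i - th j))"
    by (metis distinct_filter distinct_upt prod.distinct_set_conv_list)
  finally show ?thesis .
qed

locale distinct_eigenvalues =
  fixes d :: nat and A :: "'a::field mat" and th :: "nat \<Rightarrow> 'a" and E :: "nat \<Rightarrow> 'a mat"
  assumes carrier_A[simp]: "A \<in> carrier_mat (Suc d) (Suc d)"
    and th_inj: "inj_on th {..d}"
    and th_eigenvalue: "i \<le> d \<Longrightarrow> eigenvalue A (th i)"
    and E_eq_prim_idem: "i \<le> d \<Longrightarrow> E i = prim_idem d A th i"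
begin

abbreviation N where "N \<equiv> Suc d"

lemma E_carrier[simp]: "i \<le> d \<Longrightarrow> E i \<in> carrier_mat N N"
  by (simp add: E_eq_prim_idem prim_idem_carrier)

definition eigvec :: "nat \<Rightarrow> 'a vec" where
  "eigvec k = (SOME v. eigenvector A v (th k))"

lemma eigvec:
  assumes "k \<le> d"
  shows "eigvec k \<in> carrier_vec N" "eigvec k \<noteq> 0\<^sub>v N" "A *\<^sub>v eigvec k = th k \<cdot>\<^sub>v eigvec k"
proof -
  have "\<exists>v. eigenvector A v (th k)"
    using th_eigenvalue[OF assms] by (simp add: eigenvalue_def)
  then have "eigenvector A (eigvec k) (th k)"
    unfolding eigvec_def by (rule someI_ex)
  then show "eigvec k \<in> carrier_vec N" "eigvec k \<noteq> 0\<^sub>v N" "A *\<^sub>v eigvec k = th k \<cdot>\<^sub>v eigvec k"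
    using carrier_matD(1)[OF carrier_A] by (auto simp: eigenvector_def)
qed

lemma E_mult_eigvec:
  assumes i: "i \<le> d" and k: "k \<le> d"
  shows "E i *\<^sub>v eigvec k = (if k = i then eigvec k else 0\<^sub>v N)"
proof -
  let ?g = "\<lambda>j. (th k - th j) / (th i - th j)"
  have "E i *\<^sub>v eigvec k = prod ?g ({..d} - {i}) \<cdot>\<^sub>v eigvec k"
    unfolding E_eq_prim_idem[OF i] using eigvec[OF k] by (intro prim_idem_mult_eigenvector) auto
  moreover have "prod ?g ({..d} - {i}) = (if k = i then 1 else 0)"
  proof (cases "k = i")
    case True
    have "th i \<noteq> th j" if "j \<in> {..d} - {i}" for j
      using that i th_inj unfolding inj_on_def by blast
    then show ?thesis using True by (simp add: prod.neutral)
  next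
    case False
    have "prod ?g ({..d} - {i}) = 0"
      using False k by (intro prod_zero) (auto intro!: bexI[of _ k])
    with False show ?thesis by simp
  qed
  ultimately show ?thesis
    using eigvec(1)[OF k] by (auto intro!: eq_vecI)
qed

definition eigmat :: "'a mat" where
  "eigmat = mat N N (\<lambda>(r, k). eigvec k $ r)"

lemma eigmat_carrier[simp]: "eigmat \<in> carrier_mat N N"
  by (simp add: eigmat_def)

lemma eigmat_dim[simp]: "dim_row eigmat = N" "dim_col eigmat = N"
  by (simp_all add: eigmat_def)

lemma index_eigmat[simp]: "r < N \<Longrightarrow> k < N \<Longrightarrow> eigmat $$ (r, k) = eigvec k $ r"
  by (simp add: eigmat_def)

lemma index_mult_eigmat:
  assumes X: "X \<in> carrier_mat N N" and "r < N" "k < N"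
  shows "(X * eigmat) $$ (r, k) = (X *\<^sub>v eigvec k) $ r"
proof -
  have "col eigmat k = eigvec k"
    using eigvec(1)[of k] assms(3) by (intro eq_vecI) (auto simp: eigmat_def)
  then show ?thesis using assms by simp
qed

lemma mult_eigmat_eq:
  assumes "X \<in> carrier_mat N N" "Y \<in> carrier_mat N N" "\<And>k. k \<le> d \<Longrightarrow> X *\<^sub>v eigvec k = Y *\<^sub>v eigvec k"
  shows "X * eigmat = Y * eigmat"
proof (rule eq_matI)
  fix r k assume "r < dim_row (Y * eigmat)" "k < dim_col (Y * eigmat)"
  then have "r < N" "k < N" using assms(2) by simp_all
  then show "(X * eigmat) $$ (r, k) = (Y * eigmat) $$ (r, k)"
    using assms by (simp del: index_mult_mat add: index_mult_eigmat)
qed (use assms in simp_all)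

lemma E_mult_eigmat:
  assumes i: "i \<le> d"
  shows "E i * eigmat = eigmat * mat_unit N i i"
proof (rule eq_matI)
  fix r k assume "r < dim_row (eigmat * mat_unit N i i)" "k < dim_col (eigmat * mat_unit N i i)"
  then have "r < N" "k < N" by simp_all
  then show "(E i * eigmat) $$ (r, k) = (eigmat * mat_unit N i i) $$ (r, k)"
    using i eigvec(1)[of k]
    by (simp del: index_mult_mat add: index_mult_eigmat index_mult_mat_unit[of _ N N] E_mult_eigvec)
qed (simp_all add: carrier_matD[OF E_carrier[OF i]])

lemma eigmat_det_nonzero: "det eigmat \<noteq> 0"
proof
  assume "det eigmat = 0"
  then obtain w where w: "w \<in> carrier_vec N" "w \<noteq> 0\<^sub>v N" "eigmat *\<^sub>v w = 0\<^sub>v N"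
    using det_0_iff_vec_prod_zero_field[OF eigmat_carrier] by auto
  have "w $ i = 0" if i: "i \<le> d" for i
  proof -
    have "(eigmat * mat_unit N i i) *\<^sub>v w = E i *\<^sub>v (eigmat *\<^sub>v w)"
      using i w by (simp add: assoc_mult_mat_vec[of _ N N _ N] flip: E_mult_eigmat)
    also have "\<dots> = 0\<^sub>v N" using w i by (simp add: mult_zero_vec[of _ N N])
    finally have zero: "(eigmat * mat_unit N i i) *\<^sub>v w = 0\<^sub>v N" .
    have "((eigmat * mat_unit N i i) *\<^sub>v w) $ r = eigvec i $ r * w $ i" if r: "r < N" for r
    proof -
      have "((eigmat * mat_unit N i i) *\<^sub>v w) $ r = row (eigmat * mat_unit N i i) r \<bullet> w"
        using r by simp
      also have "\<dots> = (\<Sum>s<N. (eigmat * mat_unit N i i) $$ (r, s) * w $ s)"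
        unfolding scalar_prod_def using w r by (intro sum.cong) (auto simp del: index_mult_mat simp: index_mult_mat(2,3) atLeast0LessThan)
      also have "\<dots> = (\<Sum>s<N. if s = i then eigvec i $ r * w $ s else 0)"
        using index_mult_mat_unit[OF eigmat_carrier r, of _ i i] i r by (intro sum.cong) auto
      finally show ?thesis using i by simp
    qed
    moreover obtain r where "r < N" "eigvec i $ r \<noteq> 0"
      using eigvec(1,2)[OF i] by (metis carrier_vecD eq_vecI index_zero_vec)
    ultimately show ?thesis using zero by (metis index_zero_vec(1) mult_eq_0_iff)
  qed
  then have "w = 0\<^sub>v N" using w(1) by (intro eq_vecI) auto
  with w(2) show False ..
qed

definition eigmat_inv :: "'a mat" where
  "eigmat_inv = (SOME U. U \<in> carrier_mat N N \<and> U * eigmat = 1\<^sub>m N \<and> eigmat * U = 1\<^sub>m N)"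

lemma eigmat_inv: "eigmat_inv \<in> carrier_mat N N" "eigmat_inv * eigmat = 1\<^sub>m N" "eigmat * eigmat_inv = 1\<^sub>m N"
proof -
  have "eigmat \<in> Units (ring_mat TYPE('a) N ())"
    by (rule det_non_zero_imp_unit[OF eigmat_carrier eigmat_det_nonzero])
  then have "\<exists>U. U \<in> carrier_mat N N \<and> U * eigmat = 1\<^sub>m N \<and> eigmat * U = 1\<^sub>m N"
    unfolding Units_def ring_mat_def by auto
  then show "eigmat_inv \<in> carrier_mat N N" "eigmat_inv * eigmat = 1\<^sub>m N" "eigmat * eigmat_inv = 1\<^sub>m N"
    unfolding eigmat_inv_def by (metis (mono_tags, lifting) someI_ex)+
qed

lemma eigmat_inv_cancel:
  assumes "X \<in> carrier_mat N n"
  shows "eigmat_inv * (eigmat * X) = X" "eigmat * (eigmat_inv * X) = X"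
  using assms eigmat_inv
  by (simp_all flip: assoc_mult_mat[of _ N N _ N _ n] add: left_mult_one_mat[of _ N n])

lemmas mat_simps = assoc_mult_mat[of _ N N _ N _ N] eigmat_inv eigmat_inv_cancel[of _ N]
  right_mult_one_mat[of _ N N] left_mult_one_mat[of _ N N]

lemma eq_if_mult_eigvec_eq:
  assumes "X \<in> carrier_mat N N" "Y \<in> carrier_mat N N" "\<And>k. k \<le> d \<Longrightarrow> X *\<^sub>v eigvec k = Y *\<^sub>v eigvec k"
  shows "X = Y"
proof -
  have "X = X * eigmat * eigmat_inv" and "Y = Y * eigmat * eigmat_inv"
    using assms by (simp_all add: mat_simps)
  then show ?thesis using mult_eigmat_eq[OF assms] by simp
qed

lemma E_eq_conj_mat_unit: "i \<le> d \<Longrightarrow> E i = eigmat * mat_unit N i i * eigmat_inv"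
  by (simp flip: E_mult_eigmat add: mat_simps)

lemma mult_eigvec_assoc:
  "X \<in> carrier_mat N N \<Longrightarrow> Y \<in> carrier_mat N N \<Longrightarrow> k \<le> d \<Longrightarrow> (X * Y) *\<^sub>v eigvec k = X *\<^sub>v (Y *\<^sub>v eigvec k)"
  using eigvec(1) by (intro assoc_mult_mat_vec[of _ N N _ N]) auto

lemma E_sandwich:
  assumes i: "i \<le> d" and M: "M \<in> carrier_mat N N"
  shows "E i * M * E i = mtrace (E i * M) \<cdot>\<^sub>m E i"
proof -
  define Z where "Z = eigmat_inv * M * eigmat"
  have Z: "Z \<in> carrier_mat N N" using M by (simp add: Z_def eigmat_inv)
  have "E i * M * E i = eigmat * (mat_unit N i i * Z * mat_unit N i i) * eigmat_inv"
    using i M by (simp add: E_eq_conj_mat_unit Z_def mat_simps)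
  also have "\<dots> = Z $$ (i, i) \<cdot>\<^sub>m E i"
    unfolding mat_unit_sandwich[OF Z, of i, OF le_imp_less_Suc[OF i]] using i Z
    by (simp add: E_eq_conj_mat_unit mat_simps mult_smult_assoc_mat[of _ N N _ N] mult_smult_distrib[of _ N N _ N])
  also have "Z $$ (i, i) = mtrace (E i * M)"
  proof -
    have "mtrace (E i * M) = mtrace (eigmat * (mat_unit N i i * eigmat_inv * M))"
      using i M by (simp add: E_eq_conj_mat_unit mat_simps)
    also have "\<dots> = mtrace ((mat_unit N i i * eigmat_inv * M) * eigmat)"
      using M by (intro mtrace_mult_commute[of _ N N]) (simp_all add: eigmat_inv)
    also have "\<dots> = mtrace (mat_unit N i i * Z)"
      using M by (simp add: Z_def mat_simps)
    also have "\<dots> = mtrace (Z * mat_unit N i i)"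
      using Z by (intro mtrace_mult_commute[of _ N N]) simp_all
    finally show ?thesis using Z i by (simp add: mtrace_mult_mat_unit)
  qed
  finally show ?thesis .
qed

lemma E_left_cancel:
  assumes X: "X \<in> carrier_mat N N" and Y: "Y \<in> carrier_mat N N"
    and XY: "\<And>i. i \<le> d \<Longrightarrow> E i * X = E i * Y"
  shows "X = Y"
proof -
  have "eigmat_inv * X = eigmat_inv * Y"
  proof (rule eq_matI)
    fix r s assume "r < dim_row (eigmat_inv * Y)" "s < dim_col (eigmat_inv * Y)"
    then have rs: "r < N" "s < N" using Y carrier_matD[OF eigmat_inv(1)] by auto
    have "mat_unit N r r * (eigmat_inv * Z) = eigmat_inv * (E r * Z)" if "Z \<in> carrier_mat N N" for Z
      using that rs by (simp add: E_eq_conj_mat_unit mat_simps)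
    then have "(mat_unit N r r * (eigmat_inv * X)) $$ (r, s) = (mat_unit N r r * (eigmat_inv * Y)) $$ (r, s)"
      using X Y XY rs by simp
    then show "(eigmat_inv * X) $$ (r, s) = (eigmat_inv * Y) $$ (r, s)"
      using index_mat_unit_mult[of "eigmat_inv * X" N N r s r r] index_mat_unit_mult[of "eigmat_inv * Y" N N r s r r]
        X Y rs by (simp del: index_mult_mat add: eigmat_inv)
  qed (use X Y in \<open>simp_all add: eigmat_inv\<close>)
  then have "eigmat * (eigmat_inv * X) = eigmat * (eigmat_inv * Y)" by simp
  then show "X = Y" using X Y by (simp add: mat_simps)
qed

lemma E_right_cancel:
  assumes X: "X \<in> carrier_mat N N" and Y: "Y \<in> carrier_mat N N"
    and XY: "\<And>i. i \<le> d \<Longrightarrow> X * E i = Y * E i"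
  shows "X = Y"
proof (rule eq_if_mult_eigvec_eq[OF X Y])
  fix k assume k: "k \<le> d"
  have "X *\<^sub>v eigvec k = (X * E k) *\<^sub>v eigvec k" "Y *\<^sub>v eigvec k = (Y * E k) *\<^sub>v eigvec k"
    using X Y k E_mult_eigvec[OF k k] by (simp_all add: mult_eigvec_assoc)
  then show "X *\<^sub>v eigvec k = Y *\<^sub>v eigvec k" using XY k by simp
qed

lemma primitive_idempotents: "primitive_idempotents d A th E"
proof
  fix i assume i: "i \<le> d"
  show "A * E i = th i \<cdot>\<^sub>m E i" "E i * A = th i \<cdot>\<^sub>m E i"
    using i by (auto intro!: eq_if_mult_eigvec_eq simp: mult_eigvec_assoc E_mult_eigvec eigvec
        smult_mat_mult_vec[of _ N N] mult_zero_vec[of _ N N] mult_mat_vec[of _ N N] smult_vec_zero_vec)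
  show "E i \<noteq> 0\<^sub>m N N"
    using E_mult_eigvec[OF i i] eigvec(1,2)[OF i] by (auto simp: zero_mat_mult_vec)
  show "E i * E j = (if i = j then E i else 0\<^sub>m N N)" if "j \<le> d" for j
    using i that by (auto intro!: eq_if_mult_eigvec_eq simp: mult_eigvec_assoc E_mult_eigvec
        mult_zero_vec[of _ N N] zero_mat_mult_vec eigvec)
next
  fix i and M :: "'a mat" assume "i \<le> d" "M \<in> carrier_mat N N"
  then show "E i * M * E i = mtrace (E i * M) \<cdot>\<^sub>m E i" by (rule E_sandwich)
next
  fix X Y :: "'a mat" assume X: "X \<in> carrier_mat N N" and Y: "Y \<in> carrier_mat N N"
  show "X = Y" if "\<And>i. i \<le> d \<Longrightarrow> E i * X = E i * Y"
    using X Y that by (rule E_left_cancel)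
  show "X = Y" if "\<And>i. i \<le> d \<Longrightarrow> X * E i = Y * E i"
    using X Y that by (rule E_right_cancel)
qed simp_all

end

lemma idem_ordering_primitive_idempotents:
  assumes A: "A \<in> carrier_mat (Suc d) (Suc d)" and ord: "idem_ordering d A th E"
  shows "primitive_idempotents d A th E"
proof -
  interpret distinct_eigenvalues d A th E
    using A ord by unfold_locales (auto simp: idem_ordering_def)
  show ?thesis by (fact primitive_idempotents)
qed

theorem theorem14p6:
  fixes d :: nat and A As :: "'a::field mat" and E Es :: "nat \<Rightarrow> 'a mat"
    and th ths :: "nat \<Rightarrow> 'a"
  assumes "leonard_system d A As E Es"
    and "idem_ordering d A th E"
    and "idem_ordering d As ths Es"
    and "i \<le> d" and "j \<le> d"
  shows "ls_u A Es th i (th j) = ls_u As E ths j (ths i)"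
proof -
  have "A \<in> carrier_mat (Suc d) (Suc d)" "As \<in> carrier_mat (Suc d) (Suc d)"
    and "tridiag_cond d E As" "tridiag_cond d Es A"
    using assms(1) by (auto simp: leonard_system_def mult_free_def)
  then interpret abstract_leonard_system d A th E As ths Es
    using assms(2,3)
    by (intro abstract_leonard_system.intro abstract_leonard_system_axioms.intro
        idem_ordering_primitive_idempotents)
  show ?thesis by (rule ls_u_duality[OF assms(4,5)])
qed

end
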